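(* Let $\mathcal{C}$ be a finite set and $\mathcal{T}$ a finite set, and let $(Y,T)$ be a pair of random variables with joint distribution $P_{Y,T}$ on $\mathcal{C}\times\mathcal{T}$, where $P_Y(y)>0$ for every $y\in\mathcal{C}$. For a nonempty subset $A\subseteq\mathcal{C}$ let $P_{T|Y\in A}$ denote the conditional distribution of $T$ given the event $\{Y\in A\}$, and for $y\in\mathcal{C}$ let $P_{T|Y=y}$ denote the conditional distribution of $T$ given $\{Y=y\}$. Then $$\max_{\emptyset\neq A\subseteq \mathcal{C}} D\big(P_{T|Y\in A}\,\big\|\,P_{T}\big) \;=\; \max_{y\in \mathcal{C}} D\big(P_{T|Y=y}\,\big\|\,P_{T}\big),$$ where $P_T$ is the marginal distribution of $T$ and $D(\cdot\|\cdot)$ is the Kullback–Leibler divergence.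
   Context: $D(P\|Q)=\sum_{t\in\mathcal{T}}P(t)\log\frac{P(t)}{Q(t)}$ (with the conventions $0\log\frac{0}{q}=0$). In the paper, $Y$ is a class label and $T$ is the quantized output of a neuron of a neural network; the quantity $\max_{y} D(P_{T|Y=y}\|P_T)$ is called the Kullback–Leibler selectivity of the neuron. *)

theory Defs
  imports "HOL-Probability.Probability"
begin

definition KL_div :: "'a::finite pmf \<Rightarrow> 'a pmf \<Rightarrow> real" where
  "KL_div p q = (\<Sum>t\<in>UNIV. if pmf p t = 0 then 0 else pmf p t * ln (pmf p t / pmf q t))"

definition cond_T_given_Y_in :: "('c \<times> 't) pmf \<Rightarrow> 'c set \<Rightarrow> 't pmf" where
  "cond_T_given_Y_in PYT A = map_pmf snd (cond_pmf PYT {z. fst z \<in> A})"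

end

theory Submission imports Defs begin

text \<open>Conditioning on \<open>Y \<in> A\<close> yields the mixture of the laws of \<open>T\<close> given \<open>Y = y\<close>, \<open>y \<in> A\<close>,
  weighted by \<open>P\<^sub>Y(y) / P\<^sub>Y(A)\<close>. Since the Kullback-Leibler divergence is convex in its first
  argument (Jensen's inequality for \<open>x ln x\<close>), the divergence of the mixture from \<open>P\<^sub>T\<close> is at most
  the weighted average of the divergences of its components, hence at most their maximum. Singletons
  are admissible sets, which gives the reverse inequality.\<close>

lemma x_ln_x_ge_tangent:
  fixes x p :: real
  assumes "x \<ge> 0" "p > 0"
  shows "x * ln p + (x - p) \<le> x * ln x"
proof (cases "x = 0")
  case False
  with assms have x: "x > 0" by simp
  have "x * ln (p / x) \<le> x * (p / x - 1)"
    using ln_le_minus_one[of "p / x"] x assms by (simp add: mult_left_mono)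
  moreover have "x * (p / x - 1) = p - x" using x by (simp add: field_simps)
  moreover have "ln (p / x) = ln p - ln x" using x assms by (simp add: ln_div)
  ultimately show ?thesis by (simp add: algebra_simps)
qed (use assms in simp)

lemma x_ln_x_convex_sum:
  fixes w c :: "'i \<Rightarrow> real"
  assumes S: "finite S" and w: "\<And>i. i \<in> S \<Longrightarrow> w i \<ge> 0" and c: "\<And>i. i \<in> S \<Longrightarrow> c i \<ge> 0"
    and sum_w: "(\<Sum>i\<in>S. w i) = 1"
  shows "(\<Sum>i\<in>S. w i * c i) * ln (\<Sum>i\<in>S. w i * c i) \<le> (\<Sum>i\<in>S. w i * (c i * ln (c i)))"
proof -
  define p where "p = (\<Sum>i\<in>S. w i * c i)"
  have "p \<ge> 0" unfolding p_def using w c by (simp add: sum_nonneg)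
  show ?thesis
  proof (cases "p = 0")
    case True
    then have "\<forall>i\<in>S. w i * c i = 0"
      using S w c unfolding p_def by (subst sum_nonneg_eq_0_iff[symmetric]) auto
    then have "(\<Sum>i\<in>S. w i * (c i * ln (c i))) = 0"
      by (intro sum.neutral) (metis mult.assoc mult_zero_left)
    with True show ?thesis unfolding p_def[symmetric] by simp
  next
    case False
    with \<open>p \<ge> 0\<close> have "p > 0" by simp
    have "(\<Sum>i\<in>S. w i * (c i * ln p + (c i - p))) \<le> (\<Sum>i\<in>S. w i * (c i * ln (c i)))"
      by (intro sum_mono mult_left_mono x_ln_x_ge_tangent) (use c w \<open>p > 0\<close> in auto)
    moreover have "(\<Sum>i\<in>S. w i * (c i * ln p + (c i - p)))
        = (\<Sum>i\<in>S. w i * c i) * ln p + ((\<Sum>i\<in>S. w i * c i) - p * (\<Sum>i\<in>S. w i))"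
      by (simp add: algebra_simps sum.distrib sum_distrib_left sum_distrib_right sum_subtractf)
    ultimately show ?thesis using sum_w unfolding p_def[symmetric] by simp
  qed
qed

lemma KL_div_eq_sum_diff:
  fixes p q :: "'a::finite pmf"
  assumes "\<And>t. pmf p t > 0 \<Longrightarrow> pmf q t > 0"
  shows "KL_div p q = (\<Sum>t\<in>UNIV. pmf p t * ln (pmf p t) - pmf p t * ln (pmf q t))"
  unfolding KL_div_def
proof (rule sum.cong[OF refl])
  fix t
  show "(if pmf p t = 0 then 0 else pmf p t * ln (pmf p t / pmf q t)) =
        pmf p t * ln (pmf p t) - pmf p t * ln (pmf q t)"
  proof (cases "pmf p t = 0")
    case False
    then have "pmf p t > 0" using pmf_nonneg[of p t] by linarith
    with assms[OF this] show ?thesis by (simp add: ln_div algebra_simps)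
  qed simp
qed

lemma KL_div_convex_combination_le:
  fixes p q :: "'a::finite pmf" and ps :: "'i \<Rightarrow> 'a pmf"
  assumes S: "finite S" and w: "\<And>i. i \<in> S \<Longrightarrow> w i \<ge> 0" and sum_w: "(\<Sum>i\<in>S. w i) = 1"
    and mixture: "\<And>t. pmf p t = (\<Sum>i\<in>S. w i * pmf (ps i) t)"
    and support: "\<And>i t. i \<in> S \<Longrightarrow> pmf (ps i) t > 0 \<Longrightarrow> pmf q t > 0"
  shows "KL_div p q \<le> (\<Sum>i\<in>S. w i * KL_div (ps i) q)"
proof -
  have support_p: "pmf q t > 0" if "pmf p t > 0" for t
  proof -
    have "(\<Sum>i\<in>S. w i * pmf (ps i) t) \<noteq> 0" using that mixture[of t] by simp
    then obtain i where "i \<in> S" "w i * pmf (ps i) t \<noteq> 0"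
      by (rule sum.not_neutral_contains_not_neutral)
    with w[of i] have "pmf (ps i) t > 0" using pmf_nonneg[of "ps i" t] by auto
    with support \<open>i \<in> S\<close> show ?thesis by blast
  qed
  have "KL_div p q = (\<Sum>t\<in>UNIV. (\<Sum>i\<in>S. w i * pmf (ps i) t) * ln (\<Sum>i\<in>S. w i * pmf (ps i) t)
                   - (\<Sum>i\<in>S. w i * pmf (ps i) t) * ln (pmf q t))"
    using KL_div_eq_sum_diff[of p q, OF support_p] by (simp only: mixture)
  also have "\<dots> \<le> (\<Sum>t\<in>UNIV. \<Sum>i\<in>S. w i * (pmf (ps i) t * ln (pmf (ps i) t) - pmf (ps i) t * ln (pmf q t)))"
  proof (rule sum_mono)
    fix t
    have "(\<Sum>i\<in>S. w i * pmf (ps i) t) * ln (\<Sum>i\<in>S. w i * pmf (ps i) t)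
          \<le> (\<Sum>i\<in>S. w i * (pmf (ps i) t * ln (pmf (ps i) t)))"
      by (rule x_ln_x_convex_sum) (use S w sum_w in auto)
    moreover have "(\<Sum>i\<in>S. w i * (pmf (ps i) t * ln (pmf (ps i) t) - pmf (ps i) t * ln (pmf q t))) =
        (\<Sum>i\<in>S. w i * (pmf (ps i) t * ln (pmf (ps i) t))) - (\<Sum>i\<in>S. w i * pmf (ps i) t) * ln (pmf q t)"
      by (simp add: right_diff_distrib sum_subtractf sum_distrib_right mult.assoc)
    ultimately show "(\<Sum>i\<in>S. w i * pmf (ps i) t) * ln (\<Sum>i\<in>S. w i * pmf (ps i) t)
        - (\<Sum>i\<in>S. w i * pmf (ps i) t) * ln (pmf q t)
        \<le> (\<Sum>i\<in>S. w i * (pmf (ps i) t * ln (pmf (ps i) t) - pmf (ps i) t * ln (pmf q t)))"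
      by linarith
  qed
  also have "\<dots> = (\<Sum>i\<in>S. w i * (\<Sum>t\<in>UNIV. pmf (ps i) t * ln (pmf (ps i) t) - pmf (ps i) t * ln (pmf q t)))"
    by (subst sum.swap) (simp add: sum_distrib_left)
  also have "\<dots> = (\<Sum>i\<in>S. w i * KL_div (ps i) q)"
    by (intro sum.cong refl) (simp add: KL_div_eq_sum_diff[OF support])
  finally show ?thesis .
qed

lemma pmf_map_fst_eq_sum:
  fixes P :: "('c::finite \<times> 't::finite) pmf"
  shows "pmf (map_pmf fst P) y = (\<Sum>t\<in>UNIV. pmf P (y, t))"
proof -
  have "pmf (map_pmf fst P) y = (\<Sum>z\<in>fst -` {y}. pmf P z)"
    by (simp add: pmf_map measure_measure_pmf_finite)
  also have "fst -` {y} = Pair y ` UNIV" by auto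
  also have "(\<Sum>z\<in>Pair y ` UNIV. pmf P z) = (\<Sum>t\<in>UNIV. pmf P (y, t))"
    by (subst sum.reindex) (auto simp: inj_on_def)
  finally show ?thesis .
qed

lemma pmf_map_snd_eq_sum:
  fixes P :: "('c::finite \<times> 't::finite) pmf"
  shows "pmf (map_pmf snd P) t = (\<Sum>y\<in>UNIV. pmf P (y, t))"
proof -
  have "pmf (map_pmf snd P) t = (\<Sum>z\<in>snd -` {t}. pmf P z)"
    by (simp add: pmf_map measure_measure_pmf_finite)
  also have "snd -` {t} = (\<lambda>y. (y, t)) ` UNIV" by auto
  also have "(\<Sum>z\<in>(\<lambda>y. (y, t)) ` UNIV. pmf P z) = (\<Sum>y\<in>UNIV. pmf P (y, t))"
    by (subst sum.reindex) (auto simp: inj_on_def)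
  finally show ?thesis .
qed

lemma pmf_cond_T_given_Y_in:
  fixes P :: "('c::finite \<times> 't::finite) pmf"
  assumes "set_pmf P \<inter> {z. fst z \<in> A} \<noteq> {}"
  shows "pmf (cond_T_given_Y_in P A) t = (\<Sum>y\<in>A. pmf P (y, t)) / (\<Sum>y\<in>A. pmf (map_pmf fst P) y)"
proof -
  define S :: "('c \<times> 't) set" where "S = {z. fst z \<in> A}"
  have measure_S: "measure P S = (\<Sum>y\<in>A. pmf (map_pmf fst P) y)"
  proof -
    have "S = A \<times> UNIV" unfolding S_def by auto
    then have "measure P S = (\<Sum>y\<in>A. \<Sum>t\<in>UNIV. pmf P (y, t))"
      by (simp add: measure_measure_pmf_finite sum.cartesian_product)
    then show ?thesis by (simp add: pmf_map_fst_eq_sum)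
  qed
  have slice: "snd -` {t} \<inter> S = (\<lambda>y. (y, t)) ` A" unfolding S_def by auto
  have "pmf (cond_T_given_Y_in P A) t = (\<Sum>z\<in>snd -` {t}. if z \<in> S then pmf P z / measure P S else 0)"
    using pmf_cond[OF assms[folded S_def]]
    by (simp add: cond_T_given_Y_in_def S_def pmf_map measure_measure_pmf_finite)
  also have "\<dots> = (\<Sum>z\<in>(\<lambda>y. (y, t)) ` A. pmf P z / measure P S)"
    by (simp add: sum.inter_restrict slice[symmetric])
  also have "\<dots> = (\<Sum>y\<in>A. pmf P (y, t)) / measure P S"
    by (subst sum.reindex) (auto simp: inj_on_def sum_divide_distrib)
  finally show ?thesis using measure_S by simp
qed

lemma set_pmf_cond_T_given_Y_in_subset:
  assumes "set_pmf P \<inter> {z. fst z \<in> A} \<noteq> {}"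
  shows "set_pmf (cond_T_given_Y_in P A) \<subseteq> set_pmf (map_pmf snd P)"
  using assms by (auto simp: cond_T_given_Y_in_def set_cond_pmf)

lemma set_pmf_Int_fst_in_neq_empty:
  assumes "pmf (map_pmf fst P) y > 0" "y \<in> A"
  shows "set_pmf P \<inter> {z. fst z \<in> A} \<noteq> {}"
proof -
  from assms(1) have "y \<in> set_pmf (map_pmf fst P)" by (metis less_irrefl set_pmf_iff)
  then have "y \<in> fst ` set_pmf P" by simp
  with assms(2) show ?thesis by auto
qed

lemma pmf_cond_T_given_Y_in_mixture:
  fixes P :: "('c::finite \<times> 't::finite) pmf"
  assumes pos: "\<forall>y. pmf (map_pmf fst P) y > 0" and "A \<noteq> {}"
  shows "pmf (cond_T_given_Y_in P A) t
       = (\<Sum>y\<in>A. pmf (map_pmf fst P) y / (\<Sum>x\<in>A. pmf (map_pmf fst P) x) * pmf (cond_T_given_Y_in P {y}) t)"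
proof -
  have singleton: "pmf (cond_T_given_Y_in P {y}) t = pmf P (y, t) / pmf (map_pmf fst P) y" for y
    using pmf_cond_T_given_Y_in[OF set_pmf_Int_fst_in_neq_empty[OF pos[rule_format]]] by simp
  obtain y where "y \<in> A" using \<open>A \<noteq> {}\<close> by auto
  have "pmf (cond_T_given_Y_in P A) t = (\<Sum>y\<in>A. pmf P (y, t)) / (\<Sum>x\<in>A. pmf (map_pmf fst P) x)"
    by (rule pmf_cond_T_given_Y_in[OF set_pmf_Int_fst_in_neq_empty[OF pos[rule_format] \<open>y \<in> A\<close>]])
  also have "\<dots> = (\<Sum>y\<in>A. pmf (map_pmf fst P) y / (\<Sum>x\<in>A. pmf (map_pmf fst P) x) * (pmf P (y, t) / pmf (map_pmf fst P) y))"
    using pos by (simp add: sum_divide_distrib order.strict_implies_not_eq[symmetric])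
  finally show ?thesis by (simp add: singleton)
qed

theorem lemma1:
  fixes PYT :: "('c::finite \<times> 't::finite) pmf"
  assumes "\<forall>y. pmf (map_pmf fst PYT) y > 0"
  shows "Max {KL_div (cond_T_given_Y_in PYT A) (map_pmf snd PYT) | A. A \<noteq> {}}
       = Max ((\<lambda>y. KL_div (cond_T_given_Y_in PYT {y}) (map_pmf snd PYT)) ` UNIV)"
proof -
  define K where "K A = KL_div (cond_T_given_Y_in PYT A) (map_pmf snd PYT)" for A
  define M where "M = Max ((\<lambda>y. K {y}) ` UNIV)"
  have support: "pmf (map_pmf snd PYT) t > 0" if "pmf (cond_T_given_Y_in PYT {y}) t > 0" for y t
  proof -
    from that have "t \<in> set_pmf (cond_T_given_Y_in PYT {y})" by (simp add: set_pmf_iff)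
    moreover have "set_pmf (cond_T_given_Y_in PYT {y}) \<subseteq> set_pmf (map_pmf snd PYT)"
      using assms by (intro set_pmf_cond_T_given_Y_in_subset set_pmf_Int_fst_in_neq_empty) auto
    ultimately have "t \<in> set_pmf (map_pmf snd PYT)" by blast
    then show ?thesis by (simp add: pmf_positive)
  qed
  have "K A \<le> M" if "A \<noteq> {}" for A
  proof -
    define w where "w y = pmf (map_pmf fst PYT) y / (\<Sum>x\<in>A. pmf (map_pmf fst PYT) x)" for y
    have "(\<Sum>x\<in>A. pmf (map_pmf fst PYT) x) > 0" using assms \<open>A \<noteq> {}\<close> by (simp add: sum_pos)
    then have w_nonneg: "w y \<ge> 0" and sum_w: "(\<Sum>y\<in>A. w y) = 1" for y
      unfolding w_def by (simp_all add: sum_divide_distrib[symmetric])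
    have "K A \<le> (\<Sum>y\<in>A. w y * K {y})"
      unfolding K_def
      by (rule KL_div_convex_combination_le[OF _ w_nonneg sum_w])
         (use pmf_cond_T_given_Y_in_mixture[OF assms \<open>A \<noteq> {}\<close>] support in \<open>simp_all add: w_def\<close>)
    also have "\<dots> \<le> (\<Sum>y\<in>A. w y * M)"
      using w_nonneg by (intro sum_mono mult_left_mono) (auto simp: M_def)
    also have "\<dots> = M" using sum_w by (simp add: sum_distrib_right[symmetric])
    finally show ?thesis .
  qed
  moreover have "M \<in> K ` {A. A \<noteq> {}}"
  proof -
    have "M \<in> (\<lambda>y. K {y}) ` UNIV" unfolding M_def by (rule Max_in) auto
    then show ?thesis by blast
  qed
  ultimately have "Max (K ` {A. A \<noteq> {}}) = M"
    by (intro Max_eqI) auto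
  moreover have "{K A | A. A \<noteq> {}} = K ` {A. A \<noteq> {}}" by auto
  ultimately show ?thesis unfolding K_def M_def by simp
qed

end
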